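(* Let $(X,\mathsf{d}_X)$ be a compact metric space and $\mathfrak{A}=\bigoplus_{k=0}^n M_{m_k}(\mathbb{C})$ with $n\in\mathbb{N}$, $m_k\ge1$. Let $\mu$ be a state of $\mathfrak{A}$, and define $\Delta^{\mathfrak{A}}_\mu:X\to\mathscr{S}(C(X,\mathfrak{A}))$ by $\Delta^{\mathfrak{A}}_\mu(x)=\mu_x$, where $\mu_x(a)=\mu(a(x))$. Then $\Delta^{\mathfrak{A}}_\mu$ is a homeomorphism onto its image for the weak* topology. Furthermore, if $\|\cdot\|_{\mathsf{n}}$ is a norm on $\mathfrak{A}$ (over $\mathbb{R}$ or $\mathbb{C}$) and $M,N>0$ with $M\|\cdot\|_{\mathsf{n}}\le\|\cdot\|_{\mathfrak{A}}\le N\|\cdot\|_{\mathsf{n}}$, then for every $q\in\{C(X),\mathbb{C}\}\cup\mathscr{S}(C(X,\mathfrak{A}))$ and all $x,y\in X$, $$\mathrm{mk}_{\mathsf{L}^{(\mathsf{n}),q}_{\mathsf{d}_X}}(\Delta^{\mathfrak{A}}_\mu(x),\Delta^{\mathfrak{A}}_\mu(y))\le N\,k^{\mathfrak{A}}_\mu\,\mathsf{d}_X(x,y),$$ so $\Delta^{\mathfrak{A}}_\mu$ is $N k^{\mathfrak{A}}_\mu$-Lipschitz.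
   Context: $e_{k,(p,q)}\in\mathfrak{A}$ denotes the matrix unit that is $1$ in row $p$, column $q$ of the $k$-th summand and $0$ elsewhere, and $k^{\mathfrak{A}}_\mu=\sum_{k=0}^n\sum_{p,q=1}^{m_k}|\mu(e_{k,(p,q)})|$. $C(X,\mathfrak{A})$: continuous $\mathfrak{A}$-valued functions with supremum norm; $\mathscr{S}(\cdot)$: state space; $C(X,\mathbb{C}1_{\mathfrak{A}})$: $\mathbb{C}1_{\mathfrak{A}}$-valued functions. $l^{(\mathsf{n})}_{\mathsf{d}_X}(a)=\sup_{x\ne y}\|a(x)-a(y)\|_{\mathsf{n}}/\mathsf{d}_X(x,y)$; $\mathsf{L}^{(\mathsf{n}),C(X)}_{\mathsf{d}_X}(a)=\max\{l^{(\mathsf{n})}_{\mathsf{d}_X}(a),\inf_{b\in C(X,\mathbb{C}1_{\mathfrak{A}})}\|a-b\|\}$, $\mathsf{L}^{(\mathsf{n}),\mathbb{C}}_{\mathsf{d}_X}(a)=\max\{l^{(\mathsf{n})}_{\mathsf{d}_X}(a),\inf_{\lambda\in\mathbb{C}}\|a-\lambda1\|\}$, and for a state $\nu$ of $C(X,\mathfrak{A})$, $\mathsf{L}^{(\mathsf{n}),\nu}_{\mathsf{d}_X}(a)=\max\{l^{(\mathsf{n})}_{\mathsf{d}_X}(a),\|a-\nu(a)1\|\}$. $\mathrm{mk}_{\mathsf{L}}(\varphi,\psi)=\sup\{|\varphi(a)-\psi(a)|: a=a^*,\ \mathsf{L}(a)\le1\}$. *)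

theory Defs
  imports "HOL-Analysis.Analysis"
begin

text \<open>An element of A is represented by its matrix entries a k p q (summand k, row p, column q),
  with indices 0 \<le> k \<le> n and 0 \<le> p, q < m k; all other entries are 0.\<close>

type_synonym alg = "nat \<Rightarrow> nat \<Rightarrow> nat \<Rightarrow> complex"

definition alg_carrier :: "nat \<Rightarrow> (nat \<Rightarrow> nat) \<Rightarrow> alg set" where
  "alg_carrier n m = {a. \<forall>k p q. \<not> (k \<le> n \<and> p < m k \<and> q < m k) \<longrightarrow> a k p q = 0}"

definition alg_zero :: alg where
  "alg_zero = (\<lambda>k p q. 0)"

definition alg_add :: "alg \<Rightarrow> alg \<Rightarrow> alg" where
  "alg_add a b = (\<lambda>k p q. a k p q + b k p q)"

definition alg_sub :: "alg \<Rightarrow> alg \<Rightarrow> alg" where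
  "alg_sub a b = (\<lambda>k p q. a k p q - b k p q)"

definition alg_scale :: "complex \<Rightarrow> alg \<Rightarrow> alg" where
  "alg_scale c a = (\<lambda>k p q. c * a k p q)"

definition alg_mult :: "(nat \<Rightarrow> nat) \<Rightarrow> alg \<Rightarrow> alg \<Rightarrow> alg" where
  "alg_mult m a b = (\<lambda>k p q. \<Sum>r<m k. a k p r * b k r q)"

definition alg_star :: "alg \<Rightarrow> alg" where
  "alg_star a = (\<lambda>k p q. cnj (a k q p))"

definition alg_one :: "nat \<Rightarrow> (nat \<Rightarrow> nat) \<Rightarrow> alg" where
  "alg_one n m = (\<lambda>k p q. if k \<le> n \<and> p < m k \<and> q = p then 1 else 0)"

definition alg_unit :: "nat \<Rightarrow> nat \<Rightarrow> nat \<Rightarrow> alg" where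
  "alg_unit k p q = (\<lambda>k' p' q'. if k' = k \<and> p' = p \<and> q' = q then 1 else 0)"

definition mat_opnorm :: "nat \<Rightarrow> (nat \<Rightarrow> nat \<Rightarrow> complex) \<Rightarrow> real" where
  "mat_opnorm d A = Sup {sqrt (\<Sum>p<d. (cmod (\<Sum>q<d. A p q * v q))\<^sup>2) | v.
                          (\<Sum>q<d. (cmod (v q))\<^sup>2) \<le> 1}"

definition alg_norm :: "nat \<Rightarrow> (nat \<Rightarrow> nat) \<Rightarrow> alg \<Rightarrow> real" where
  "alg_norm n m a = Max ((\<lambda>k. mat_opnorm (m k) (a k)) ` {..n})"

definition alg_state :: "nat \<Rightarrow> (nat \<Rightarrow> nat) \<Rightarrow> (alg \<Rightarrow> complex) \<Rightarrow> bool" where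
  "alg_state n m \<mu> \<longleftrightarrow>
     (\<forall>a\<in>alg_carrier n m. \<forall>b\<in>alg_carrier n m. \<mu> (alg_add a b) = \<mu> a + \<mu> b) \<and>
     (\<forall>c. \<forall>a\<in>alg_carrier n m. \<mu> (alg_scale c a) = c * \<mu> a) \<and>
     (\<forall>a\<in>alg_carrier n m. \<mu> (alg_mult m (alg_star a) a) \<in> \<real> \<and>
                           0 \<le> Re (\<mu> (alg_mult m (alg_star a) a))) \<and>
     \<mu> (alg_one n m) = 1"

definition kmu :: "nat \<Rightarrow> (nat \<Rightarrow> nat) \<Rightarrow> (alg \<Rightarrow> complex) \<Rightarrow> real" where
  "kmu n m \<mu> = (\<Sum>k\<le>n. \<Sum>p<m k. \<Sum>q<m k. cmod (\<mu> (alg_unit k p q)))"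

text \<open>A (real or complex) norm on A (every complex norm is in particular a real norm).\<close>
definition is_norm_on :: "nat \<Rightarrow> (nat \<Rightarrow> nat) \<Rightarrow> (alg \<Rightarrow> real) \<Rightarrow> bool" where
  "is_norm_on n m nn \<longleftrightarrow>
     (\<forall>a\<in>alg_carrier n m. nn a = 0 \<longleftrightarrow> a = alg_zero) \<and>
     (\<forall>r::real. \<forall>a\<in>alg_carrier n m. nn (alg_scale (complex_of_real r) a) = \<bar>r\<bar> * nn a) \<and>
     (\<forall>a\<in>alg_carrier n m. \<forall>b\<in>alg_carrier n m. nn (alg_add a b) \<le> nn a + nn b)"

definition CXA :: "'x metric \<Rightarrow> nat \<Rightarrow> (nat \<Rightarrow> nat) \<Rightarrow> ('x \<Rightarrow> alg) set" where
  "CXA mX n m = {a. (\<forall>x\<in>mspace mX. a x \<in> alg_carrier n m) \<and>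
                    (\<forall>x. x \<notin> mspace mX \<longrightarrow> a x = alg_zero) \<and>
                    (\<forall>x\<in>mspace mX. \<forall>e>0. \<exists>\<delta>>0. \<forall>y\<in>mspace mX.
                        mdist mX x y < \<delta> \<longrightarrow> alg_norm n m (alg_sub (a y) (a x)) < e)}"

definition fadd :: "('x \<Rightarrow> alg) \<Rightarrow> ('x \<Rightarrow> alg) \<Rightarrow> 'x \<Rightarrow> alg" where
  "fadd a b = (\<lambda>x. alg_add (a x) (b x))"

definition fsub :: "('x \<Rightarrow> alg) \<Rightarrow> ('x \<Rightarrow> alg) \<Rightarrow> 'x \<Rightarrow> alg" where
  "fsub a b = (\<lambda>x. alg_sub (a x) (b x))"

definition fscale :: "complex \<Rightarrow> ('x \<Rightarrow> alg) \<Rightarrow> 'x \<Rightarrow> alg" where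
  "fscale c a = (\<lambda>x. alg_scale c (a x))"

definition fmult :: "(nat \<Rightarrow> nat) \<Rightarrow> ('x \<Rightarrow> alg) \<Rightarrow> ('x \<Rightarrow> alg) \<Rightarrow> 'x \<Rightarrow> alg" where
  "fmult m a b = (\<lambda>x. alg_mult m (a x) (b x))"

definition fstar :: "('x \<Rightarrow> alg) \<Rightarrow> 'x \<Rightarrow> alg" where
  "fstar a = (\<lambda>x. alg_star (a x))"

definition fone :: "'x metric \<Rightarrow> nat \<Rightarrow> (nat \<Rightarrow> nat) \<Rightarrow> 'x \<Rightarrow> alg" where
  "fone mX n m = (\<lambda>x. if x \<in> mspace mX then alg_one n m else alg_zero)"

text \<open>Supremum norm (0 if X is empty).\<close>
definition sup_norm :: "'x metric \<Rightarrow> nat \<Rightarrow> (nat \<Rightarrow> nat) \<Rightarrow> ('x \<Rightarrow> alg) \<Rightarrow> real" where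
  "sup_norm mX n m a = Sup (insert 0 ((\<lambda>x. alg_norm n m (a x)) ` mspace mX))"

text \<open>States of C(X,A); they are taken to vanish outside C(X,A) (functionals on C(X,A)).\<close>
definition cx_state :: "'x metric \<Rightarrow> nat \<Rightarrow> (nat \<Rightarrow> nat) \<Rightarrow> (('x \<Rightarrow> alg) \<Rightarrow> complex) \<Rightarrow> bool" where
  "cx_state mX n m \<nu> \<longleftrightarrow>
     (\<forall>a\<in>CXA mX n m. \<forall>b\<in>CXA mX n m. \<nu> (fadd a b) = \<nu> a + \<nu> b) \<and>
     (\<forall>c. \<forall>a\<in>CXA mX n m. \<nu> (fscale c a) = c * \<nu> a) \<and>
     (\<forall>a\<in>CXA mX n m. \<nu> (fmult m (fstar a) a) \<in> \<real> \<and> 0 \<le> Re (\<nu> (fmult m (fstar a) a))) \<and>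
     \<nu> (fone mX n m) = 1 \<and>
     (\<forall>a. a \<notin> CXA mX n m \<longrightarrow> \<nu> a = 0)"

definition weakstar :: "'x metric \<Rightarrow> nat \<Rightarrow> (nat \<Rightarrow> nat) \<Rightarrow> (('x \<Rightarrow> alg) \<Rightarrow> complex) topology" where
  "weakstar mX n m = topology_generated_by
     {{\<nu>. cx_state mX n m \<nu> \<and> \<nu> a \<in> U} | a U. a \<in> CXA mX n m \<and> open U}"

definition Delta :: "'x metric \<Rightarrow> nat \<Rightarrow> (nat \<Rightarrow> nat) \<Rightarrow> (alg \<Rightarrow> complex) \<Rightarrow> 'x \<Rightarrow> ('x \<Rightarrow> alg) \<Rightarrow> complex" where
  "Delta mX n m \<mu> x = (\<lambda>a. if a \<in> CXA mX n m then \<mu> (a x) else 0)"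

definition lipc :: "'x metric \<Rightarrow> (alg \<Rightarrow> real) \<Rightarrow> ('x \<Rightarrow> alg) \<Rightarrow> ereal" where
  "lipc mX nn a = (SUP xy\<in>{(x, y). x \<in> mspace mX \<and> y \<in> mspace mX \<and> x \<noteq> y}.
                     ereal (nn (alg_sub (a (fst xy)) (a (snd xy))) / mdist mX (fst xy) (snd xy)))"

definition L_CX :: "'x metric \<Rightarrow> nat \<Rightarrow> (nat \<Rightarrow> nat) \<Rightarrow> (alg \<Rightarrow> real) \<Rightarrow> ('x \<Rightarrow> alg) \<Rightarrow> ereal" where
  "L_CX mX n m nn a = max (lipc mX nn a)
     (ereal (Inf {sup_norm mX n m (fsub a b) | b. b \<in> CXA mX n m \<and>
                    (\<forall>x\<in>mspace mX. \<exists>c. b x = alg_scale c (alg_one n m))}))"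

definition L_C :: "'x metric \<Rightarrow> nat \<Rightarrow> (nat \<Rightarrow> nat) \<Rightarrow> (alg \<Rightarrow> real) \<Rightarrow> ('x \<Rightarrow> alg) \<Rightarrow> ereal" where
  "L_C mX n m nn a = max (lipc mX nn a)
     (ereal (Inf {sup_norm mX n m (fsub a (fscale c (fone mX n m))) | c. True}))"

definition L_st :: "'x metric \<Rightarrow> nat \<Rightarrow> (nat \<Rightarrow> nat) \<Rightarrow> (alg \<Rightarrow> real) \<Rightarrow> (('x \<Rightarrow> alg) \<Rightarrow> complex)
                    \<Rightarrow> ('x \<Rightarrow> alg) \<Rightarrow> ereal" where
  "L_st mX n m nn \<nu> a = max (lipc mX nn a)
     (ereal (sup_norm mX n m (fsub a (fscale (\<nu> a) (fone mX n m)))))"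

definition mk :: "'x metric \<Rightarrow> nat \<Rightarrow> (nat \<Rightarrow> nat) \<Rightarrow> (('x \<Rightarrow> alg) \<Rightarrow> ereal)
                  \<Rightarrow> (('x \<Rightarrow> alg) \<Rightarrow> complex) \<Rightarrow> (('x \<Rightarrow> alg) \<Rightarrow> complex) \<Rightarrow> ereal" where
  "mk mX n m L \<phi> \<psi> = Sup {ereal (cmod (\<phi> a - \<psi> a)) | a.
                             a \<in> CXA mX n m \<and> fstar a = a \<and> L a \<le> 1}"

end

theory Submission
  imports Defs
begin

text \<open>Since \<open>\<AA>\<close> is finite-dimensional, its C*-norm is equivalent to the entrywise
  \<open>l\<^sup>1\<close>-norm: each matrix entry is bounded by the norm, and the operator norm of each
  summand is bounded by the sum of the moduli of its entries. Consequently a function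
  \<open>X \<rightarrow> \<AA>\<close> is continuous iff all its entries are, and expanding a state in the matrix units,
  \<open>\<mu>(b) = \<Sum> b\<^sub>k\<^sub>p\<^sub>q \<mu>(e\<^sub>k\<^sub>p\<^sub>q)\<close>, gives \<open>|\<mu>(b)| \<le> k\<^sub>\<mu> \<parallel>b\<parallel>\<close>.
  The first fact makes \<open>x \<mapsto> \<mu>(a(x))\<close> continuous, i.e. \<open>\<Delta>\<close> is weak*-continuous; it is
  injective because \<open>\<mu>\<^sub>y\<close> evaluates the function \<open>d(x,\<cdot>) 1\<close> to \<open>d(x,y)\<close>; and
  the weak* topology is Hausdorff, so compactness of \<open>X\<close> makes \<open>\<Delta>\<close> a homeomorphism onto
  its image. For the Lipschitz bound, \<open>|\<mu>\<^sub>x(a) - \<mu>\<^sub>y(a)| = |\<mu>(a(x) - a(y))|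
  \<le> k\<^sub>\<mu> N \<parallel>a(x) - a(y)\<parallel>\<^sub>n \<le> k\<^sub>\<mu> N d(x,y)\<close> whenever the Lipschitz constant of \<open>a\<close> is at most 1,
  which holds for all three seminorms.\<close>

lemma continuous_map_mtopology_of_iff:
  fixes f :: "'a \<Rightarrow> 'b::metric_space"
  shows "continuous_map (mtopology_of m) euclidean f \<longleftrightarrow>
    (\<forall>x\<in>mspace m. \<forall>e>0. \<exists>d>0. \<forall>y. y \<in> mspace m \<and> mdist m x y < d \<longrightarrow> dist (f x) (f y) < e)"
  using Metric_space.metric_continuous_map[OF Metric_space_mspace_mdist Metric_space_mspace_mdist,
      of m euclidean_metric f]
  by (simp add: mtopology_of_def)

lemma continuous_map_complex_mult_left:
  fixes f :: "'a \<Rightarrow> complex"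
  shows "continuous_map X euclidean f \<Longrightarrow> continuous_map X euclidean (\<lambda>x. c * f x)"
  by (simp add: continuous_map_atin tendsto_mult)

lemma continuous_map_of_real:
  "continuous_map X euclidean f \<Longrightarrow> continuous_map X euclidean (\<lambda>x. complex_of_real (f x))"
  by (simp add: continuous_map_atin tendsto_of_real)

lemma matrix_vector_norm_le_sum_norms:
  fixes d :: nat
  assumes "(\<Sum>q<d. (cmod (v q))\<^sup>2) \<le> 1"
  shows "sqrt (\<Sum>p<d. (cmod (\<Sum>q<d. A p q * v q))\<^sup>2) \<le> (\<Sum>p<d. \<Sum>q<d. cmod (A p q))"
proof -
  have v_le: "cmod (v q) \<le> 1" if "q < d" for q
  proof -
    have "(cmod (v q))\<^sup>2 \<le> (\<Sum>q<d. (cmod (v q))\<^sup>2)"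
      by (rule member_le_sum) (use that in auto)
    with assms have "(cmod (v q))\<^sup>2 \<le> 1" by linarith
    then show ?thesis by (simp add: power_le_one_iff)
  qed
  have "sqrt (\<Sum>p<d. (cmod (\<Sum>q<d. A p q * v q))\<^sup>2) = L2_set (\<lambda>p. cmod (\<Sum>q<d. A p q * v q)) {..<d}"
    by (simp add: L2_set_def)
  also have "\<dots> \<le> (\<Sum>p<d. cmod (\<Sum>q<d. A p q * v q))"
    by (rule L2_set_le_sum) auto
  also have "\<dots> \<le> (\<Sum>p<d. \<Sum>q<d. cmod (A p q * v q))"
    by (intro sum_mono norm_sum)
  also have "\<dots> \<le> (\<Sum>p<d. \<Sum>q<d. cmod (A p q))"
    using v_le by (intro sum_mono) (simp add: norm_mult mult_left_le)
  finally show ?thesis .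
qed

lemma bdd_above_mat_opnorm_set:
  fixes d :: nat
  shows "bdd_above {sqrt (\<Sum>p<d. (cmod (\<Sum>q<d. A p q * v q))\<^sup>2) | v. (\<Sum>q<d. (cmod (v q))\<^sup>2) \<le> 1}"
  unfolding bdd_above_def using matrix_vector_norm_le_sum_norms by blast

lemma zero_in_mat_opnorm_set:
  fixes d :: nat
  shows "0 \<in> {sqrt (\<Sum>p<d. (cmod (\<Sum>q<d. A p q * v q))\<^sup>2) | v. (\<Sum>q<d. (cmod (v q))\<^sup>2) \<le> 1}"
  by (rule CollectI, rule exI[of _ "\<lambda>_. 0"]) simp

lemma mat_opnorm_nonneg: "0 \<le> mat_opnorm d A"
  unfolding mat_opnorm_def by (rule cSup_upper[OF zero_in_mat_opnorm_set bdd_above_mat_opnorm_set])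

lemma mat_opnorm_le_sum_norms: "mat_opnorm d A \<le> (\<Sum>p<d. \<Sum>q<d. cmod (A p q))"
  unfolding mat_opnorm_def
  using zero_in_mat_opnorm_set matrix_vector_norm_le_sum_norms by (intro cSup_least) blast+

lemma norm_entry_le_mat_opnorm:
  assumes "p < d" "q < d"
  shows "cmod (A p q) \<le> mat_opnorm d A"
proof -
  define v where "v = (\<lambda>q'. if q' = q then (1::complex) else 0)"
  have "(\<Sum>q'<d. (cmod (v q'))\<^sup>2) = (\<Sum>q'<d. if q' = q then 1 else 0)"
    by (rule sum.cong) (auto simp: v_def)
  then have v_unit: "(\<Sum>q'<d. (cmod (v q'))\<^sup>2) \<le> 1"
    using assms by simp
  have column: "(\<Sum>q'<d. A p' q' * v q') = A p' q" for p'
  proof -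
    have "(\<Sum>q'<d. A p' q' * v q') = (\<Sum>q'<d. if q' = q then A p' q else 0)"
      by (rule sum.cong) (auto simp: v_def)
    with assms show ?thesis by simp
  qed
  have "cmod (A p q) = sqrt ((cmod (A p q))\<^sup>2)" by simp
  also have "\<dots> \<le> sqrt (\<Sum>p'<d. (cmod (A p' q))\<^sup>2)"
    using assms by (intro real_sqrt_le_mono member_le_sum) auto
  also have "\<dots> = sqrt (\<Sum>p'<d. (cmod (\<Sum>q'<d. A p' q' * v q'))\<^sup>2)"
    by (simp add: column)
  also have "\<dots> \<le> mat_opnorm d A"
    unfolding mat_opnorm_def using v_unit by (intro cSup_upper[OF _ bdd_above_mat_opnorm_set]) blast
  finally show ?thesis .
qed

definition alg_index :: "nat \<Rightarrow> (nat \<Rightarrow> nat) \<Rightarrow> (nat \<times> nat \<times> nat) set" where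
  "alg_index n m = Sigma {..n} (\<lambda>k. {..<m k} \<times> {..<m k})"

lemma finite_alg_index: "finite (alg_index n m)"
  by (simp add: alg_index_def)

lemma mem_alg_index [simp]: "(k, p, q) \<in> alg_index n m \<longleftrightarrow> k \<le> n \<and> p < m k \<and> q < m k"
  by (simp add: alg_index_def)

lemma sum_alg_index:
  "(\<Sum>(k, p, q)\<in>alg_index n m. f k p q) = (\<Sum>k\<le>n. \<Sum>p<m k. \<Sum>q<m k. f k p q)"
  by (simp add: alg_index_def sum.Sigma sum.cartesian_product)

lemma mat_opnorm_le_alg_norm: "k \<le> n \<Longrightarrow> mat_opnorm (m k) (b k) \<le> alg_norm n m b"
  unfolding alg_norm_def by (rule Max_ge) auto

lemma norm_entry_le_alg_norm:
  assumes "b \<in> alg_carrier n m"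
  shows "cmod (b k p q) \<le> alg_norm n m b"
proof (cases "k \<le> n \<and> p < m k \<and> q < m k")
  case True
  then show ?thesis
    using norm_entry_le_mat_opnorm[of p "m k" q "b k"] mat_opnorm_le_alg_norm[of k n m b] by linarith
next
  case False
  then show ?thesis
    using assms mat_opnorm_nonneg[of "m 0" "b 0"] mat_opnorm_le_alg_norm[of 0 n m b]
    by (simp add: alg_carrier_def)
qed

lemma alg_norm_le_sum_norms: "alg_norm n m b \<le> (\<Sum>(k, p, q)\<in>alg_index n m. cmod (b k p q))"
  unfolding alg_norm_def sum_alg_index
proof (rule Max.boundedI; clarsimp)
  fix k assume "k \<le> n"
  have "mat_opnorm (m k) (b k) \<le> (\<Sum>p<m k. \<Sum>q<m k. cmod (b k p q))"
    by (rule mat_opnorm_le_sum_norms)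
  also have "\<dots> \<le> (\<Sum>k\<le>n. \<Sum>p<m k. \<Sum>q<m k. cmod (b k p q))"
    using \<open>k \<le> n\<close> by (intro member_le_sum[where f = "\<lambda>k. \<Sum>p<m k. \<Sum>q<m k. cmod (b k p q)"] sum_nonneg) auto
  finally show "mat_opnorm (m k) (b k) \<le> (\<Sum>k\<le>n. \<Sum>p<m k. \<Sum>q<m k. cmod (b k p q))" .
qed


lemma alg_state_add:
  "alg_state n m \<mu> \<Longrightarrow> a \<in> alg_carrier n m \<Longrightarrow> b \<in> alg_carrier n m \<Longrightarrow> \<mu> (alg_add a b) = \<mu> a + \<mu> b"
  by (simp add: alg_state_def)

lemma alg_state_scale:
  "alg_state n m \<mu> \<Longrightarrow> a \<in> alg_carrier n m \<Longrightarrow> \<mu> (alg_scale c a) = c * \<mu> a"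
  by (simp add: alg_state_def)

lemma alg_state_one: "alg_state n m \<mu> \<Longrightarrow> \<mu> (alg_one n m) = 1"
  by (simp add: alg_state_def)

lemma alg_carrier_scale: "a \<in> alg_carrier n m \<Longrightarrow> alg_scale c a \<in> alg_carrier n m"
  by (simp add: alg_carrier_def alg_scale_def)

lemma alg_carrier_sub:
  "a \<in> alg_carrier n m \<Longrightarrow> b \<in> alg_carrier n m \<Longrightarrow> alg_sub a b \<in> alg_carrier n m"
  by (simp add: alg_carrier_def alg_sub_def)

lemma alg_carrier_one: "alg_one n m \<in> alg_carrier n m"
  by (simp add: alg_carrier_def alg_one_def)

lemma alg_state_sub:
  assumes "alg_state n m \<mu>" "a \<in> alg_carrier n m" "b \<in> alg_carrier n m"
  shows "\<mu> (alg_sub a b) = \<mu> a - \<mu> b"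
proof -
  have "alg_sub a b = alg_add a (alg_scale (-1) b)"
    by (simp add: alg_sub_def alg_add_def alg_scale_def)
  then show ?thesis
    using assms alg_carrier_scale by (simp add: alg_state_add alg_state_scale)
qed

definition restrict_entries :: "(nat \<times> nat \<times> nat) set \<Rightarrow> alg \<Rightarrow> alg" where
  "restrict_entries T b = (\<lambda>k p q. if (k, p, q) \<in> T then b k p q else 0)"

lemma alg_state_restrict_entries:
  assumes st: "alg_state n m \<mu>" and "finite T" "T \<subseteq> alg_index n m"
  shows "\<mu> (restrict_entries T b) = (\<Sum>(k, p, q)\<in>T. b k p q * \<mu> (alg_unit k p q))"
  using assms(2,3)
proof (induction T rule: finite_induct)
  case empty
  have "restrict_entries {} b = alg_scale 0 (alg_one n m)"
    by (simp add: restrict_entries_def alg_scale_def)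
  then show ?case
    using alg_state_scale[OF st alg_carrier_one] by simp
next
  case (insert i T)
  obtain k p q where i: "i = (k, p, q)" by (cases i)
  have unit: "alg_unit k p q \<in> alg_carrier n m"
    using insert.prems i by (auto simp: alg_carrier_def alg_unit_def)
  have rest: "restrict_entries T b \<in> alg_carrier n m"
    using insert.prems by (auto simp: alg_carrier_def restrict_entries_def)
  have "restrict_entries (insert i T) b
      = alg_add (alg_scale (b k p q) (alg_unit k p q)) (restrict_entries T b)"
    using insert.hyps i
    by (auto simp: restrict_entries_def alg_add_def alg_scale_def alg_unit_def fun_eq_iff)
  then show ?case
    using insert i unit rest alg_carrier_scale
    by (simp add: alg_state_add[OF st] alg_state_scale[OF st])
qed

lemma alg_state_expansion:
  assumes "alg_state n m \<mu>" "b \<in> alg_carrier n m"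
  shows "\<mu> b = (\<Sum>(k, p, q)\<in>alg_index n m. b k p q * \<mu> (alg_unit k p q))"
proof -
  have "restrict_entries (alg_index n m) b = b"
    using assms(2) by (auto simp: restrict_entries_def alg_carrier_def fun_eq_iff)
  then show ?thesis
    using alg_state_restrict_entries[OF assms(1) finite_alg_index subset_refl] by metis
qed

lemma kmu_nonneg: "0 \<le> kmu n m \<mu>"
  unfolding kmu_def by (intro sum_nonneg) auto

lemma norm_alg_state_le:
  assumes st: "alg_state n m \<mu>" and b: "b \<in> alg_carrier n m"
  shows "cmod (\<mu> b) \<le> kmu n m \<mu> * alg_norm n m b"
proof -
  have "cmod (\<mu> b) \<le> (\<Sum>(k, p, q)\<in>alg_index n m. cmod (b k p q) * cmod (\<mu> (alg_unit k p q)))"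
    unfolding alg_state_expansion[OF st b] case_prod_unfold
    by (rule order_trans[OF norm_sum]) (simp add: norm_mult)
  also have "\<dots> \<le> (\<Sum>(k, p, q)\<in>alg_index n m. alg_norm n m b * cmod (\<mu> (alg_unit k p q)))"
    unfolding case_prod_unfold
    by (intro sum_mono mult_right_mono norm_entry_le_alg_norm[OF b]) auto
  also have "\<dots> = kmu n m \<mu> * alg_norm n m b"
    by (simp add: kmu_def sum_alg_index sum_distrib_left sum_distrib_right mult.commute)
  finally show ?thesis .
qed


lemma CXA_iff_continuous_entries:
  "a \<in> CXA mX n m \<longleftrightarrow>
     (\<forall>x\<in>mspace mX. a x \<in> alg_carrier n m) \<and> (\<forall>x. x \<notin> mspace mX \<longrightarrow> a x = alg_zero) \<and>
     (\<forall>k p q. continuous_map (mtopology_of mX) euclidean (\<lambda>x. a x k p q))"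
proof -
  have "(\<forall>x\<in>mspace mX. \<forall>e>0. \<exists>\<delta>>0. \<forall>y\<in>mspace mX.
           mdist mX x y < \<delta> \<longrightarrow> alg_norm n m (alg_sub (a y) (a x)) < e)
        \<longleftrightarrow> (\<forall>k p q. continuous_map (mtopology_of mX) euclidean (\<lambda>x. a x k p q))"
    if carrier: "\<forall>x\<in>mspace mX. a x \<in> alg_carrier n m"
  proof
    assume cont: "\<forall>x\<in>mspace mX. \<forall>e>0. \<exists>\<delta>>0. \<forall>y\<in>mspace mX.
                    mdist mX x y < \<delta> \<longrightarrow> alg_norm n m (alg_sub (a y) (a x)) < e"
    show "\<forall>k p q. continuous_map (mtopology_of mX) euclidean (\<lambda>x. a x k p q)"
    proof (clarsimp simp: continuous_map_mtopology_of_iff)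
      fix k p q x and e :: real
      assume "x \<in> mspace mX" "0 < e"
      then obtain \<delta> where "\<delta> > 0" and \<delta>: "\<forall>y\<in>mspace mX.
          mdist mX x y < \<delta> \<longrightarrow> alg_norm n m (alg_sub (a y) (a x)) < e"
        using cont by blast
      have "dist (a x k p q) (a y k p q) < e" if "y \<in> mspace mX" "mdist mX x y < \<delta>" for y
      proof -
        have "dist (a x k p q) (a y k p q) = cmod (alg_sub (a y) (a x) k p q)"
          by (simp add: alg_sub_def dist_norm norm_minus_commute)
        also have "\<dots> \<le> alg_norm n m (alg_sub (a y) (a x))"
          using carrier that \<open>x \<in> mspace mX\<close> by (intro norm_entry_le_alg_norm alg_carrier_sub) auto
        finally show ?thesis using \<delta> that by fastforce
      qed
      then show "\<exists>\<delta>>0. \<forall>y. y \<in> mspace mX \<and> mdist mX x y < \<delta> \<longrightarrow> dist (a x k p q) (a y k p q) < e"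
        using \<open>\<delta> > 0\<close> by blast
    qed
  next
    assume entries: "\<forall>k p q. continuous_map (mtopology_of mX) euclidean (\<lambda>x. a x k p q)"
    show "\<forall>x\<in>mspace mX. \<forall>e>0. \<exists>\<delta>>0. \<forall>y\<in>mspace mX.
            mdist mX x y < \<delta> \<longrightarrow> alg_norm n m (alg_sub (a y) (a x)) < e"
    proof (intro ballI allI impI)
      fix x and e :: real
      assume "x \<in> mspace mX" "0 < e"
      define h where "h y = (\<Sum>(k, p, q)\<in>alg_index n m. cmod (a y k p q - a x k p q))" for y
      have "continuous_map (mtopology_of mX) euclidean h"
        unfolding h_def case_prod_unfold
        using entries finite_alg_index by (intro continuous_intros) auto
      then obtain \<delta> where "\<delta> > 0" and \<delta>: "\<forall>y. y \<in> mspace mX \<and> mdist mX x y < \<delta> \<longrightarrow> dist (h x) (h y) < e"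
        using \<open>x \<in> mspace mX\<close> \<open>0 < e\<close> unfolding continuous_map_mtopology_of_iff by blast
      have "alg_norm n m (alg_sub (a y) (a x)) < e" if "y \<in> mspace mX" "mdist mX x y < \<delta>" for y
      proof -
        have "alg_norm n m (alg_sub (a y) (a x)) \<le> h y"
          using alg_norm_le_sum_norms[of n m "alg_sub (a y) (a x)"] by (simp add: h_def alg_sub_def)
        also have "\<dots> < e"
          using \<delta> that by (auto simp: h_def dist_real_def abs_less_iff)
        finally show ?thesis .
      qed
      then show "\<exists>\<delta>>0. \<forall>y\<in>mspace mX. mdist mX x y < \<delta> \<longrightarrow> alg_norm n m (alg_sub (a y) (a x)) < e"
        using \<open>\<delta> > 0\<close> by blast
    qed
  qed
  then show ?thesis
    unfolding CXA_def by blast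
qed

lemma CXA_fadd: "a \<in> CXA mX n m \<Longrightarrow> b \<in> CXA mX n m \<Longrightarrow> fadd a b \<in> CXA mX n m"
  by (auto simp: CXA_iff_continuous_entries fadd_def alg_add_def alg_carrier_def alg_zero_def
      intro!: continuous_map_add)

lemma CXA_fscale: "a \<in> CXA mX n m \<Longrightarrow> fscale c a \<in> CXA mX n m"
  by (auto simp: CXA_iff_continuous_entries fscale_def alg_scale_def alg_carrier_def alg_zero_def
      intro!: continuous_map_complex_mult_left)

definition scalar_fun :: "'x metric \<Rightarrow> nat \<Rightarrow> (nat \<Rightarrow> nat) \<Rightarrow> ('x \<Rightarrow> real) \<Rightarrow> 'x \<Rightarrow> alg" where
  "scalar_fun mX n m f =
     (\<lambda>x. if x \<in> mspace mX then alg_scale (complex_of_real (f x)) (alg_one n m) else alg_zero)"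

lemma CXA_scalar_fun:
  assumes f: "continuous_map (mtopology_of mX) euclidean f"
  shows "scalar_fun mX n m f \<in> CXA mX n m"
  unfolding CXA_iff_continuous_entries
proof (intro conjI allI ballI impI)
  fix k p q
  have "continuous_map (mtopology_of mX) euclidean (\<lambda>x. alg_one n m k p q * complex_of_real (f x))"
    by (intro continuous_map_complex_mult_left continuous_map_of_real f)
  then show "continuous_map (mtopology_of mX) euclidean (\<lambda>x. scalar_fun mX n m f x k p q)"
    by (rule continuous_map_eq) (simp add: scalar_fun_def alg_scale_def mult.commute)
qed (auto simp: scalar_fun_def alg_carrier_scale alg_carrier_one)

lemma fone_eq_scalar_fun: "fone mX n m = scalar_fun mX n m (\<lambda>_. 1)"
  by (auto simp: fone_def scalar_fun_def alg_scale_def fun_eq_iff)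

lemma CXA_fone: "fone mX n m \<in> CXA mX n m"
  unfolding fone_eq_scalar_fun by (intro CXA_scalar_fun continuous_map_canonical_const)

lemma alg_state_scalar_fun:
  "alg_state n m \<mu> \<Longrightarrow> x \<in> mspace mX \<Longrightarrow> \<mu> (scalar_fun mX n m f x) = f x"
  by (simp add: scalar_fun_def alg_state_scale alg_carrier_one alg_state_one)


lemma CXA_carrier: "a \<in> CXA mX n m \<Longrightarrow> x \<in> mspace mX \<Longrightarrow> a x \<in> alg_carrier n m"
  by (simp add: CXA_def)

lemma Delta_apply: "a \<in> CXA mX n m \<Longrightarrow> Delta mX n m \<mu> x a = \<mu> (a x)"
  by (simp add: Delta_def)

lemma cx_state_Delta:
  assumes st: "alg_state n m \<mu>" and x: "x \<in> mspace mX"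
  shows "cx_state mX n m (Delta mX n m \<mu> x)"
  unfolding cx_state_def
proof (intro conjI ballI allI impI)
  fix a b assume a: "a \<in> CXA mX n m" and b: "b \<in> CXA mX n m"
  show "Delta mX n m \<mu> x (fadd a b) = Delta mX n m \<mu> x a + Delta mX n m \<mu> x b"
    using Delta_apply[OF CXA_fadd[OF a b]] a b x
    by (simp add: Delta_apply fadd_def alg_state_add[OF st] CXA_carrier)
  fix c
  show "Delta mX n m \<mu> x (fscale c a) = c * Delta mX n m \<mu> x a"
    using Delta_apply[OF CXA_fscale[OF a]] a x
    by (simp add: Delta_apply fscale_def alg_state_scale[OF st] CXA_carrier)
next
  fix a assume a: "a \<in> CXA mX n m"
  have "\<mu> (alg_mult m (alg_star (a x)) (a x)) \<in> \<real> \<and> 0 \<le> Re (\<mu> (alg_mult m (alg_star (a x)) (a x)))"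
    using st a x by (simp add: alg_state_def CXA_def)
  then have "Delta mX n m \<mu> x (fmult m (fstar a) a) \<in> \<real> \<and>
             0 \<le> Re (Delta mX n m \<mu> x (fmult m (fstar a) a))"
    by (auto simp: Delta_def fmult_def fstar_def)
  then show "Delta mX n m \<mu> x (fmult m (fstar a) a) \<in> \<real>"
    and "0 \<le> Re (Delta mX n m \<mu> x (fmult m (fstar a) a))" by auto
next
  have "Delta mX n m \<mu> x (fone mX n m) = \<mu> (fone mX n m x)"
    by (rule Delta_apply[OF CXA_fone])
  then show "Delta mX n m \<mu> x (fone mX n m) = 1"
    using x by (simp add: fone_def alg_state_one[OF st])
qed (simp add: Delta_def)

lemma continuous_map_alg_state_comp:
  assumes st: "alg_state n m \<mu>" and a: "a \<in> CXA mX n m"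
  shows "continuous_map (mtopology_of mX) euclidean (\<lambda>x. \<mu> (a x))"
proof -
  have "continuous_map (mtopology_of mX) euclidean
          (\<lambda>x. \<Sum>(k, p, q)\<in>alg_index n m. \<mu> (alg_unit k p q) * a x k p q)"
    unfolding case_prod_unfold using a finite_alg_index
    by (intro continuous_map_sum continuous_map_complex_mult_left)
       (auto simp: CXA_iff_continuous_entries)
  then show ?thesis
    by (rule continuous_map_eq)
       (use a in \<open>simp add: alg_state_expansion[OF st] CXA_def mult.commute\<close>)
qed

lemma topspace_weakstar: "topspace (weakstar mX n m) = {\<nu>. cx_state mX n m \<nu>}"
  unfolding weakstar_def topology_generated_by_topspace using CXA_fone by blast

lemma openin_weakstar:
  "a \<in> CXA mX n m \<Longrightarrow> open U \<Longrightarrow> openin (weakstar mX n m) {\<nu>. cx_state mX n m \<nu> \<and> \<nu> a \<in> U}"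
  unfolding weakstar_def by (rule topology_generated_by_Basis) blast

lemma Hausdorff_space_weakstar: "Hausdorff_space (weakstar mX n m)"
  unfolding Hausdorff_space_def topspace_weakstar
proof (clarify)
  fix \<nu> \<nu>' assume st: "cx_state mX n m \<nu>" "cx_state mX n m \<nu>'" and "\<nu> \<noteq> \<nu>'"
  then obtain a where "\<nu> a \<noteq> \<nu>' a" by (auto simp: fun_eq_iff)
  have a: "a \<in> CXA mX n m"
  proof (rule ccontr)
    assume "a \<notin> CXA mX n m"
    with st have "\<nu> a = 0" "\<nu>' a = 0" by (simp_all add: cx_state_def)
    with \<open>\<nu> a \<noteq> \<nu>' a\<close> show False by simp
  qed
  obtain U V where "open U" "open V" "\<nu> a \<in> U" "\<nu>' a \<in> V" "U \<inter> V = {}"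
    using hausdorff[OF \<open>\<nu> a \<noteq> \<nu>' a\<close>] by blast
  show "\<exists>U V. openin (weakstar mX n m) U \<and> openin (weakstar mX n m) V \<and>
                   \<nu> \<in> U \<and> \<nu>' \<in> V \<and> disjnt U V"
  proof (intro exI conjI)
    show "openin (weakstar mX n m) {\<nu>. cx_state mX n m \<nu> \<and> \<nu> a \<in> U}"
      by (rule openin_weakstar[OF a \<open>open U\<close>])
    show "openin (weakstar mX n m) {\<nu>. cx_state mX n m \<nu> \<and> \<nu> a \<in> V}"
      by (rule openin_weakstar[OF a \<open>open V\<close>])
    show "disjnt {\<nu>. cx_state mX n m \<nu> \<and> \<nu> a \<in> U} {\<nu>. cx_state mX n m \<nu> \<and> \<nu> a \<in> V}"
      using \<open>U \<inter> V = {}\<close> by (auto simp: disjnt_def)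
  qed (use st \<open>\<nu> a \<in> U\<close> \<open>\<nu>' a \<in> V\<close> in auto)
qed

lemma continuous_map_Delta:
  assumes st: "alg_state n m \<mu>"
  shows "continuous_map (mtopology_of mX) (weakstar mX n m) (Delta mX n m \<mu>)"
  unfolding weakstar_def
proof (rule continuous_on_generated_topo)
  fix V assume "V \<in> {{\<nu>. cx_state mX n m \<nu> \<and> \<nu> a \<in> U} | a U. a \<in> CXA mX n m \<and> open U}"
  then obtain a U where a: "a \<in> CXA mX n m" and "open U"
    and V: "V = {\<nu>. cx_state mX n m \<nu> \<and> \<nu> a \<in> U}" by blast
  have "Delta mX n m \<mu> x \<in> V \<longleftrightarrow> \<mu> (a x) \<in> U" if "x \<in> mspace mX" for x
    using cx_state_Delta[OF st that] by (simp add: V Delta_apply[OF a])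
  then have "Delta mX n m \<mu> -` V \<inter> topspace (mtopology_of mX)
      = {x \<in> topspace (mtopology_of mX). \<mu> (a x) \<in> U}"
    unfolding topspace_mtopology_of by blast
  moreover have "openin euclidean U"
    using \<open>open U\<close> by simp
  ultimately show "openin (mtopology_of mX) (Delta mX n m \<mu> -` V \<inter> topspace (mtopology_of mX))"
    using openin_continuous_map_preimage[OF continuous_map_alg_state_comp[OF st a]] by simp
next
  show "Delta mX n m \<mu> ` topspace (mtopology_of mX)
      \<subseteq> \<Union> {{\<nu>. cx_state mX n m \<nu> \<and> \<nu> a \<in> U} | a U. a \<in> CXA mX n m \<and> open U}"
  proof -
    have "Delta mX n m \<mu> ` topspace (mtopology_of mX) \<subseteq> topspace (weakstar mX n m)"
      by (auto simp: topspace_weakstar cx_state_Delta[OF st])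
    then show ?thesis
      by (simp add: weakstar_def topology_generated_by_topspace)
  qed
qed

lemma inj_on_Delta:
  assumes st: "alg_state n m \<mu>"
  shows "inj_on (Delta mX n m \<mu>) (mspace mX)"
proof (rule inj_onI)
  fix x y assume x: "x \<in> mspace mX" and y: "y \<in> mspace mX"
    and eq: "Delta mX n m \<mu> x = Delta mX n m \<mu> y"
  define d where "d = scalar_fun mX n m (mdist mX x)"
  have d: "d \<in> CXA mX n m"
    unfolding d_def using x by (intro CXA_scalar_fun continuous_on_mdist)
  have "\<mu> (d x) = \<mu> (d y)"
    using fun_cong[OF eq, of d] by (simp add: Delta_apply[OF d])
  then have "mdist mX x x = mdist mX x y"
    using x y by (simp add: d_def alg_state_scalar_fun[OF st])
  with x y show "x = y" by (metis mdist_zero)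
qed

lemma homeomorphic_map_Delta:
  assumes "compact_space (mtopology_of mX)" and st: "alg_state n m \<mu>"
  shows "homeomorphic_map (mtopology_of mX)
           (subtopology (weakstar mX n m) (Delta mX n m \<mu> ` mspace mX)) (Delta mX n m \<mu>)"
proof (rule continuous_imp_homeomorphic_map)
  have "Delta mX n m \<mu> ` mspace mX \<subseteq> topspace (weakstar mX n m)"
    using cx_state_Delta[OF st] by (auto simp: topspace_weakstar)
  then show "Delta mX n m \<mu> ` topspace (mtopology_of mX)
      = topspace (subtopology (weakstar mX n m) (Delta mX n m \<mu> ` mspace mX))"
    by auto
  show "continuous_map (mtopology_of mX)
          (subtopology (weakstar mX n m) (Delta mX n m \<mu> ` mspace mX)) (Delta mX n m \<mu>)"
    using continuous_map_Delta[OF st] by (simp add: continuous_map_in_subtopology)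
  show "Hausdorff_space (subtopology (weakstar mX n m) (Delta mX n m \<mu> ` mspace mX))"
    by (rule Hausdorff_space_subtopology[OF Hausdorff_space_weakstar])
  show "inj_on (Delta mX n m \<mu>) (topspace (mtopology_of mX))"
    using inj_on_Delta[OF st] by simp
qed (fact assms)


lemma lipc_le_one_imp_le_mdist:
  assumes "lipc mX nn a \<le> 1" "x \<in> mspace mX" "y \<in> mspace mX" "x \<noteq> y"
  shows "nn (alg_sub (a x) (a y)) \<le> mdist mX x y"
proof -
  have "ereal (nn (alg_sub (a x) (a y)) / mdist mX x y) \<le> lipc mX nn a"
    unfolding lipc_def by (rule SUP_upper2[of "(x, y)"]) (use assms(2-4) in auto)
  then have "nn (alg_sub (a x) (a y)) / mdist mX x y \<le> 1"
    using assms(1) by (metis ereal_less_eq(3) one_ereal_def order_trans)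
  moreover have "0 < mdist mX x y"
    using assms(2-4) by (simp add: order_le_neq_trans)
  ultimately show ?thesis
    by (simp add: divide_le_eq)
qed

lemma norm_Delta_diff_le:
  assumes st: "alg_state n m \<mu>" and "0 \<le> N"
    and nrm: "\<forall>b\<in>alg_carrier n m. alg_norm n m b \<le> N * nn b"
    and x: "x \<in> mspace mX" and y: "y \<in> mspace mX"
    and a: "a \<in> CXA mX n m" and lip: "lipc mX nn a \<le> 1"
  shows "cmod (Delta mX n m \<mu> x a - Delta mX n m \<mu> y a) \<le> N * kmu n m \<mu> * mdist mX x y"
proof (cases "x = y")
  case False
  have diff: "alg_sub (a x) (a y) \<in> alg_carrier n m"
    using a x y by (simp add: CXA_carrier alg_carrier_sub)
  have "cmod (Delta mX n m \<mu> x a - Delta mX n m \<mu> y a) = cmod (\<mu> (alg_sub (a x) (a y)))"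
    using a x y by (simp add: Delta_apply alg_state_sub[OF st] CXA_carrier)
  also have "\<dots> \<le> kmu n m \<mu> * alg_norm n m (alg_sub (a x) (a y))"
    by (rule norm_alg_state_le[OF st diff])
  also have "\<dots> \<le> kmu n m \<mu> * (N * mdist mX x y)"
  proof (rule mult_left_mono[OF _ kmu_nonneg])
    have "alg_norm n m (alg_sub (a x) (a y)) \<le> N * nn (alg_sub (a x) (a y))"
      using nrm diff by blast
    also have "\<dots> \<le> N * mdist mX x y"
      using lipc_le_one_imp_le_mdist[OF lip x y False] \<open>0 \<le> N\<close> by (rule mult_left_mono)
    finally show "alg_norm n m (alg_sub (a x) (a y)) \<le> N * mdist mX x y" .
  qed
  finally show ?thesis
    by (simp add: ac_simps)
qed (use \<open>0 \<le> N\<close> in \<open>simp add: kmu_nonneg\<close>)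

lemma mk_Delta_le:
  assumes st: "alg_state n m \<mu>" and "0 \<le> N"
    and nrm: "\<forall>b\<in>alg_carrier n m. alg_norm n m b \<le> N * nn b"
    and x: "x \<in> mspace mX" and y: "y \<in> mspace mX"
    and L: "\<And>a. L a \<le> 1 \<Longrightarrow> lipc mX nn a \<le> 1"
  shows "mk mX n m L (Delta mX n m \<mu> x) (Delta mX n m \<mu> y) \<le> ereal (N * kmu n m \<mu> * mdist mX x y)"
  unfolding mk_def
  using norm_Delta_diff_le[OF st \<open>0 \<le> N\<close> nrm x y] L by (auto intro!: Sup_least)

theorem proposition3p6:
  fixes mX :: "'x metric" and n :: nat and m :: "nat \<Rightarrow> nat" and \<mu> :: "alg \<Rightarrow> complex"
  assumes "compact_space (mtopology_of mX)"
    and "\<forall>k\<le>n. 1 \<le> m k"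
    and "alg_state n m \<mu>"
  shows "homeomorphic_map (mtopology_of mX)
           (subtopology (weakstar mX n m) (Delta mX n m \<mu> ` mspace mX)) (Delta mX n m \<mu>)
       \<and> (\<forall>nn M N. is_norm_on n m nn \<and> 0 < M \<and> 0 < N \<and>
            (\<forall>a\<in>alg_carrier n m. M * nn a \<le> alg_norm n m a \<and> alg_norm n m a \<le> N * nn a) \<longrightarrow>
            (\<forall>x\<in>mspace mX. \<forall>y\<in>mspace mX.
               mk mX n m (L_CX mX n m nn) (Delta mX n m \<mu> x) (Delta mX n m \<mu> y)
                 \<le> ereal (N * kmu n m \<mu> * mdist mX x y)
             \<and> mk mX n m (L_C mX n m nn) (Delta mX n m \<mu> x) (Delta mX n m \<mu> y)
                 \<le> ereal (N * kmu n m \<mu> * mdist mX x y)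
             \<and> (\<forall>\<nu>. cx_state mX n m \<nu> \<longrightarrow>
                  mk mX n m (L_st mX n m nn \<nu>) (Delta mX n m \<mu> x) (Delta mX n m \<mu> y)
                    \<le> ereal (N * kmu n m \<mu> * mdist mX x y))))"
proof (intro conjI allI impI ballI)
  show "homeomorphic_map (mtopology_of mX)
          (subtopology (weakstar mX n m) (Delta mX n m \<mu> ` mspace mX)) (Delta mX n m \<mu>)"
    using assms(1,3) by (rule homeomorphic_map_Delta)
next
  fix nn M N x y
  assume "is_norm_on n m nn \<and> 0 < M \<and> 0 < N \<and>
          (\<forall>a\<in>alg_carrier n m. M * nn a \<le> alg_norm n m a \<and> alg_norm n m a \<le> N * nn a)"
  then have "0 \<le> N" and nrm: "\<forall>b\<in>alg_carrier n m. alg_norm n m b \<le> N * nn b"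
    by auto
  note mk_le = mk_Delta_le[OF assms(3) this]
  assume "x \<in> mspace mX" "y \<in> mspace mX"
  then show "mk mX n m (L_CX mX n m nn) (Delta mX n m \<mu> x) (Delta mX n m \<mu> y)
               \<le> ereal (N * kmu n m \<mu> * mdist mX x y)"
    and "mk mX n m (L_C mX n m nn) (Delta mX n m \<mu> x) (Delta mX n m \<mu> y)
               \<le> ereal (N * kmu n m \<mu> * mdist mX x y)"
    and "\<And>\<nu>. mk mX n m (L_st mX n m nn \<nu>) (Delta mX n m \<mu> x) (Delta mX n m \<mu> y)
               \<le> ereal (N * kmu n m \<mu> * mdist mX x y)"
    by (auto intro!: mk_le simp: L_CX_def L_C_def L_st_def)
qed

end
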